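(* Let $(\Gamma,\psi)$ be an $H$-asymptotic couple with asymptotic integration and let $\gamma\in(\Gamma^{>})'$. Then $\int\gamma>-\int s(\gamma)=-\chi(\int\gamma)>0$. Furthermore, if $\gamma_0,\gamma_1\in(\Gamma^{>})'$ and $\gamma_0\le\gamma_1$, then $-\int s(\gamma_0)\le-\int s(\gamma_1)$.
   Context: An asymptotic couple is a pair $(\Gamma,\psi)$ with $\Gamma$ an ordered abelian group and $\psi:\Gamma\setminus\{0\}\to\Gamma$ such that for all nonzero $\alpha,\beta$: $\alpha+\beta\ne0\Rightarrow\psi(\alpha+\beta)\ge\min(\psi(\alpha),\psi(\beta))$; $\psi(k\alpha)=\psi(\alpha)$ for $k\in\mathbb{Z}\setminus\{0\}$; $\alpha>0\Rightarrow\alpha+\psi(\alpha)>\psi(\beta)$. $H$-asymptotic: $0<\alpha\le\beta\Rightarrow\psi(\alpha)\ge\psi(\beta)$. Write $\gamma'=\gamma+\psi(\gamma)$ for $\gamma\ne0$, $(\Gamma^{>})'=\{\gamma':\gamma>0\}$. Asymptotic integration: every $\alpha\in\Gamma$ equals $\gamma'$ for a (necessarily unique) $\gamma\ne0$, denoted $\int\alpha$. Successor function $s(\alpha)=\psi(\int\alpha)$; contraction map $\chi(\alpha)=\int\psi(\alpha)$ for $\alpha\ne0$, $\chi(0)=0$. *)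

theory Defs
  imports Main
begin

text \<open>An asymptotic couple (Gamma, psi): Gamma is the ordered abelian group given by the
type 'a; psi is a function on Gamma whose value at 0 is irrelevant (psi is only
defined on Gamma without 0 in the paper).\<close>

definition zmult :: "int \<Rightarrow> 'a::ab_group_add \<Rightarrow> 'a" where
  "zmult k \<alpha> = (if k \<ge> 0 then (\<Sum>i<nat k. \<alpha>) else - (\<Sum>i<nat (- k). \<alpha>))"

definition asymptotic_couple :: "('a::linordered_ab_group_add \<Rightarrow> 'a) \<Rightarrow> bool" where
  "asymptotic_couple psi \<longleftrightarrow>
     (\<forall>\<alpha> \<beta>. \<alpha> \<noteq> 0 \<longrightarrow> \<beta> \<noteq> 0 \<longrightarrow> \<alpha> + \<beta> \<noteq> 0 \<longrightarrow> psi (\<alpha> + \<beta>) \<ge> min (psi \<alpha>) (psi \<beta>)) \<and>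
     (\<forall>\<alpha> (k::int). \<alpha> \<noteq> 0 \<longrightarrow> k \<noteq> 0 \<longrightarrow> psi (zmult k \<alpha>) = psi \<alpha>) \<and>
     (\<forall>\<alpha> \<beta>. \<alpha> > 0 \<longrightarrow> \<beta> \<noteq> 0 \<longrightarrow> \<alpha> + psi \<alpha> > psi \<beta>)"

definition H_asymptotic :: "('a::linordered_ab_group_add \<Rightarrow> 'a) \<Rightarrow> bool" where
  "H_asymptotic psi \<longleftrightarrow> (\<forall>\<alpha> \<beta>. 0 < \<alpha> \<longrightarrow> \<alpha> \<le> \<beta> \<longrightarrow> psi \<alpha> \<ge> psi \<beta>)"

definition deriv_ac :: "('a::linordered_ab_group_add \<Rightarrow> 'a) \<Rightarrow> 'a \<Rightarrow> 'a" where
  "deriv_ac psi \<gamma> = \<gamma> + psi \<gamma>"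

definition pos_derivs :: "('a::linordered_ab_group_add \<Rightarrow> 'a) \<Rightarrow> 'a set" where
  "pos_derivs psi = {deriv_ac psi \<gamma> | \<gamma>. \<gamma> > 0}"

definition has_asymptotic_integration :: "('a::linordered_ab_group_add \<Rightarrow> 'a) \<Rightarrow> bool" where
  "has_asymptotic_integration psi \<longleftrightarrow> (\<forall>\<alpha>. \<exists>\<gamma>. \<gamma> \<noteq> 0 \<and> deriv_ac psi \<gamma> = \<alpha>)"

definition integ :: "('a::linordered_ab_group_add \<Rightarrow> 'a) \<Rightarrow> 'a \<Rightarrow> 'a" where
  "integ psi \<alpha> = (THE \<gamma>. \<gamma> \<noteq> 0 \<and> deriv_ac psi \<gamma> = \<alpha>)"

definition succ_ac :: "('a::linordered_ab_group_add \<Rightarrow> 'a) \<Rightarrow> 'a \<Rightarrow> 'a" where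
  "succ_ac psi \<alpha> = psi (integ psi \<alpha>)"

definition contr_ac :: "('a::linordered_ab_group_add \<Rightarrow> 'a) \<Rightarrow> 'a \<Rightarrow> 'a" where
  "contr_ac psi \<alpha> = (if \<alpha> = 0 then 0 else integ psi (psi \<alpha>))"

end

theory Submission
  imports Defs
begin

text \<open>Since \<open>\<gamma> \<mapsto> \<gamma>'\<close> is strictly increasing on nonzero elements, \<open>\<integral>\<close> is increasing and
  inverts the derivative. For \<open>\<alpha> > 0\<close> put \<open>\<delta> = \<integral>\<psi>(\<alpha>)\<close>, so \<open>\<delta> + \<psi>(\<delta>) = \<psi>(\<alpha>)\<close>.
  If \<open>\<delta> > 0\<close> this contradicts \<open>\<delta> + \<psi>(\<delta>) > \<psi>(\<alpha>)\<close>; hence \<open>\<delta> < 0\<close>, and then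
  \<open>\<psi>(-\<delta>) = \<psi>(\<alpha>) - \<delta> > \<psi>(\<alpha>)\<close> forces \<open>-\<delta> < \<alpha>\<close> by the \<open>H\<close>-property. Applied to
  \<open>\<alpha> = \<integral>\<gamma>\<close> with \<open>\<gamma> \<in> (\<Gamma>\<^sup>>)'\<close> this gives the inequalities; monotonicity follows by
  composing the increasing map \<open>\<integral>\<close>, the decreasing map \<open>\<psi>\<close> on positive elements, and \<open>\<integral>\<close> again.\<close>

locale H_asymptotic_couple =
  fixes psi :: "'a::linordered_ab_group_add \<Rightarrow> 'a"
  assumes asymptotic_couple: "asymptotic_couple psi"
    and H_asymptotic: "H_asymptotic psi"
begin

lemma psi_add_ge_min:
  "\<alpha> \<noteq> 0 \<Longrightarrow> \<beta> \<noteq> 0 \<Longrightarrow> \<alpha> + \<beta> \<noteq> 0 \<Longrightarrow> min (psi \<alpha>) (psi \<beta>) \<le> psi (\<alpha> + \<beta>)"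
  using asymptotic_couple unfolding asymptotic_couple_def by blast

lemma psi_less_deriv_ac: "0 < \<alpha> \<Longrightarrow> \<beta> \<noteq> 0 \<Longrightarrow> psi \<beta> < deriv_ac psi \<alpha>"
  using asymptotic_couple unfolding asymptotic_couple_def deriv_ac_def by blast

lemma psi_antimono: "0 < \<alpha> \<Longrightarrow> \<alpha> \<le> \<beta> \<Longrightarrow> psi \<beta> \<le> psi \<alpha>"
  using H_asymptotic unfolding H_asymptotic_def by blast

lemma psi_uminus: "\<alpha> \<noteq> 0 \<Longrightarrow> psi (- \<alpha>) = psi \<alpha>"
proof -
  assume "\<alpha> \<noteq> 0"
  moreover have "zmult (-1) \<alpha> = - \<alpha>" by (simp add: zmult_def)
  ultimately show ?thesis
    using asymptotic_couple unfolding asymptotic_couple_def by (metis zero_neq_neg_one)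
qed

lemma deriv_ac_strict_mono_pos:
  assumes "0 < \<alpha>" "\<alpha> < \<beta>"
  shows "deriv_ac psi \<alpha> < deriv_ac psi \<beta>"
proof (cases "psi \<alpha> \<le> psi \<beta>")
  case True
  with assms have "psi \<beta> = psi \<alpha>" using psi_antimono[of \<alpha> \<beta>] by simp
  with assms show ?thesis unfolding deriv_ac_def by simp
next
  case False
  define \<delta> where "\<delta> = \<beta> - \<alpha>"
  have "0 < \<delta>" "\<beta> = \<alpha> + \<delta>" using assms by (simp_all add: \<delta>_def)
  with False assms have "psi \<delta> \<le> psi \<beta>"
    using psi_add_ge_min[of \<alpha> \<delta>] add_pos_pos[of \<alpha> \<delta>] by (auto simp: min_le_iff_disj)
  moreover have "psi \<alpha> < \<delta> + psi \<delta>"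
    using psi_less_deriv_ac[of \<delta> \<alpha>] \<open>0 < \<delta>\<close> assms unfolding deriv_ac_def by simp
  ultimately have "psi \<alpha> < \<delta> + psi \<beta>"
    by (meson add_left_mono less_le_trans)
  then show ?thesis unfolding deriv_ac_def \<open>\<beta> = \<alpha> + \<delta>\<close> by (simp add: ac_simps)
qed

lemma deriv_ac_strict_mono:
  assumes "\<alpha> \<noteq> 0" "\<beta> \<noteq> 0" "\<alpha> < \<beta>"
  shows "deriv_ac psi \<alpha> < deriv_ac psi \<beta>"
proof -
  consider "0 < \<alpha>" | "\<alpha> < 0" "0 < \<beta>" | "\<beta> < 0"
    using assms by (meson linorder_neqE order.strict_trans)
  then show ?thesis
  proof cases
    case 1
    then show ?thesis using deriv_ac_strict_mono_pos assms by blast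
  next
    case 2
    have "psi \<alpha> = psi (- \<alpha>)" using psi_uminus assms by simp
    also have "\<dots> < deriv_ac psi \<beta>" using psi_less_deriv_ac 2 by simp
    finally show ?thesis using 2 unfolding deriv_ac_def
      by (metis add_less_same_cancel2 order.strict_trans)
  next
    case 3
    have "psi (- \<alpha>) \<le> psi (- \<beta>)" using psi_antimono[of "- \<beta>" "- \<alpha>"] 3 assms by simp
    then show ?thesis using psi_uminus assms unfolding deriv_ac_def by (metis add_less_le_mono)
  qed
qed

lemma deriv_ac_less_iff:
  "\<alpha> \<noteq> 0 \<Longrightarrow> \<beta> \<noteq> 0 \<Longrightarrow> deriv_ac psi \<alpha> < deriv_ac psi \<beta> \<longleftrightarrow> \<alpha> < \<beta>"
  using deriv_ac_strict_mono by (metis less_asym linorder_neqE)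

lemma deriv_ac_inj: "\<alpha> \<noteq> 0 \<Longrightarrow> \<beta> \<noteq> 0 \<Longrightarrow> deriv_ac psi \<alpha> = deriv_ac psi \<beta> \<Longrightarrow> \<alpha> = \<beta>"
  using deriv_ac_less_iff by (metis less_irrefl linorder_neqE)

lemma integ_deriv_ac: "\<alpha> \<noteq> 0 \<Longrightarrow> integ psi (deriv_ac psi \<alpha>) = \<alpha>"
  unfolding integ_def by (rule the_equality) (use deriv_ac_inj in auto)

lemma integ_pos_derivs: "\<gamma> \<in> pos_derivs psi \<Longrightarrow> 0 < integ psi \<gamma>"
  unfolding pos_derivs_def using integ_deriv_ac by fastforce

end

locale H_asymptotic_couple_integration = H_asymptotic_couple +
  assumes has_asymptotic_integration: "has_asymptotic_integration psi"
begin

lemma integ_nonzero_deriv_ac: "integ psi \<alpha> \<noteq> 0 \<and> deriv_ac psi (integ psi \<alpha>) = \<alpha>"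
  using has_asymptotic_integration integ_deriv_ac
  unfolding has_asymptotic_integration_def by metis

lemma integ_mono: "\<alpha> \<le> \<beta> \<Longrightarrow> integ psi \<alpha> \<le> integ psi \<beta>"
  using deriv_ac_less_iff integ_nonzero_deriv_ac by (metis not_le)

lemma integ_psi_bounds:
  assumes "0 < \<alpha>"
  shows "0 < - integ psi (psi \<alpha>)" and "- integ psi (psi \<alpha>) < \<alpha>"
proof -
  define \<delta> where "\<delta> = integ psi (psi \<alpha>)"
  have "\<delta> \<noteq> 0" and \<delta>: "\<delta> + psi \<delta> = psi \<alpha>"
    using integ_nonzero_deriv_ac unfolding \<delta>_def deriv_ac_def by blast+
  have "\<delta> < 0"
  proof (rule ccontr)
    assume "\<not> \<delta> < 0"
    with \<open>\<delta> \<noteq> 0\<close> have "psi \<alpha> < \<delta> + psi \<delta>"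
      using psi_less_deriv_ac assms unfolding deriv_ac_def by simp
    with \<delta> show False by simp
  qed
  then show "0 < - integ psi (psi \<alpha>)" by (simp add: \<delta>_def)
  have psi_neg: "psi (- \<delta>) = psi \<alpha> - \<delta>"
    using \<delta> psi_uminus[OF \<open>\<delta> \<noteq> 0\<close>] by (simp add: algebra_simps)
  show "- integ psi (psi \<alpha>) < \<alpha>"
  proof (rule ccontr)
    assume "\<not> - integ psi (psi \<alpha>) < \<alpha>"
    then have "psi (- \<delta>) \<le> psi \<alpha>" using psi_antimono assms by (simp add: \<delta>_def)
    with psi_neg \<open>\<delta> < 0\<close> show False by simp
  qed
qed

end

theorem lemma3p13:
  fixes psi :: "'a::linordered_ab_group_add \<Rightarrow> 'a"
  assumes "asymptotic_couple psi" and "H_asymptotic psi"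
    and "has_asymptotic_integration psi"
  shows "(\<forall>\<gamma> \<in> pos_derivs psi.
           integ psi \<gamma> > - integ psi (succ_ac psi \<gamma>) \<and>
           - integ psi (succ_ac psi \<gamma>) = - contr_ac psi (integ psi \<gamma>) \<and>
           - contr_ac psi (integ psi \<gamma>) > 0) \<and>
         (\<forall>\<gamma>0 \<in> pos_derivs psi. \<forall>\<gamma>1 \<in> pos_derivs psi. \<gamma>0 \<le> \<gamma>1 \<longrightarrow>
           - integ psi (succ_ac psi \<gamma>0) \<le> - integ psi (succ_ac psi \<gamma>1))"
proof -
  interpret H_asymptotic_couple_integration psi
    using assms by unfold_locales
  have contr_integ: "contr_ac psi (integ psi \<gamma>) = integ psi (succ_ac psi \<gamma>)"
    if "\<gamma> \<in> pos_derivs psi" for \<gamma>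
    using integ_pos_derivs[OF that] by (auto simp: contr_ac_def succ_ac_def)
  show ?thesis
  proof (intro conjI ballI impI)
    fix \<gamma> assume "\<gamma> \<in> pos_derivs psi"
    then show "- integ psi (succ_ac psi \<gamma>) < integ psi \<gamma>"
      and "- integ psi (succ_ac psi \<gamma>) = - contr_ac psi (integ psi \<gamma>)"
      and "0 < - contr_ac psi (integ psi \<gamma>)"
      using integ_pos_derivs integ_psi_bounds contr_integ unfolding succ_ac_def by auto
  next
    fix \<gamma>0 \<gamma>1 assume "\<gamma>0 \<in> pos_derivs psi" "\<gamma>1 \<in> pos_derivs psi" "\<gamma>0 \<le> \<gamma>1"
    then have "psi (integ psi \<gamma>1) \<le> psi (integ psi \<gamma>0)"
      using psi_antimono integ_pos_derivs integ_mono by blast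
    then show "- integ psi (succ_ac psi \<gamma>0) \<le> - integ psi (succ_ac psi \<gamma>1)"
      unfolding succ_ac_def using integ_mono by simp
  qed
qed

end
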